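(* Let $k \geq \ell \geq 2$ and $n \geq k+\ell$. Let $\mathcal F \subset \binom{[n]}{k}$ and $\mathcal G \subset \binom{[n]}{\ell}$ be non-trivial, shifted and cross-intersecting. Then $$|\mathcal F| + |\mathcal G| \leq \sum_{2 \leq i \leq \ell+1} \binom{\ell+1}{i}\binom{n-\ell-1}{k-i} + \binom{\ell+1}{\ell} =: g(n,k,\ell).$$
   Context: Families are cross-intersecting if every member of one meets every member of the other; a non-empty family is non-trivial if the intersection of all its members is empty. For $r$-sets $A=\{x_1<\dots<x_r\}$, $B=\{y_1<\dots<y_r\}$, $A\prec B$ means $x_i\le y_i$ for all $i$; a family of $r$-sets is shifted (initial) if $A\prec B\in\mathcal F$ implies $A\in\mathcal F$. Binomial coefficients $\binom{a}{b}$ with $b<0$ are $0$. *)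

theory Defs
  imports Main
begin

definition kth :: "nat set \<Rightarrow> nat \<Rightarrow> nat" where
  "kth A i = sorted_list_of_set A ! i"

definition shift_le :: "nat set \<Rightarrow> nat set \<Rightarrow> bool" where
  "shift_le A B \<longleftrightarrow> finite A \<and> finite B \<and> card A = card B \<and>
     (\<forall>i < card A. kth A i \<le> kth B i)"

definition rsets :: "nat \<Rightarrow> nat \<Rightarrow> nat set set" where
  "rsets n r = {A. A \<subseteq> {1..n} \<and> card A = r}"

definition shifted :: "nat \<Rightarrow> nat \<Rightarrow> nat set set \<Rightarrow> bool" where
  "shifted n r F \<longleftrightarrow> F \<subseteq> rsets n r \<and>
     (\<forall>A B. A \<in> rsets n r \<longrightarrow> B \<in> F \<longrightarrow> shift_le A B \<longrightarrow> A \<in> F)"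

definition cross_intersecting :: "'a set set \<Rightarrow> 'a set set \<Rightarrow> bool" where
  "cross_intersecting F G \<longleftrightarrow> (\<forall>A\<in>F. \<forall>B\<in>G. A \<inter> B \<noteq> {})"

definition non_trivial :: "'a set set \<Rightarrow> bool" where
  "non_trivial F \<longleftrightarrow> F \<noteq> {} \<and> \<Inter>F = {}"

definition binom :: "int \<Rightarrow> int \<Rightarrow> int" where
  "binom a b = (if b < 0 \<or> a < 0 then 0 else int (nat a choose nat b))"

definition g_bound :: "nat \<Rightarrow> nat \<Rightarrow> nat \<Rightarrow> int" where
  "g_bound n k l = (\<Sum>i = 2..l+1. binom (int l + 1) (int i) * binom (int n - int l - 1) (int k - int i))
                   + binom (int l + 1) (int l)"

end

theory Submission
  imports Defs
begin

text \<open>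
  Since \<open>\<G>\<close> is non-trivial and shifted it contains every \<open>\<ell>\<close>-subset of \<open>[\<ell>+1]\<close>, so every
  member of \<open>\<F>\<close> meets \<open>[\<ell>+1]\<close> in at least two points; symmetrically every member of \<open>\<G>\<close>
  meets \<open>[k+1]\<close> in at least two points. At most \<open>\<ell>+1\<close> members of \<open>\<G>\<close> lie inside \<open>[\<ell>+1]\<close>.
  Any other \<open>G \<in> \<G>\<close> is mapped to the \<open>k\<close>-set \<open>\<phi>(G)\<close> obtained by complementing \<open>G\<close> inside
  \<open>[s]\<close>, where \<open>s\<close> is the last point at which the walk \<open>m \<mapsto> m - 2|G \<inter> [m]|\<close> takes the
  value \<open>k - \<ell>\<close>. The same walk for \<open>\<phi>(G)\<close> recovers \<open>s\<close>, so \<open>\<phi>\<close> is injective; \<open>\<phi>(G)\<close> still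
  meets \<open>[\<ell>+1]\<close> twice; and \<open>\<phi>(G) \<notin> \<F>\<close>, because the \<open>\<ell>\<close> smallest elements of \<open>[n] - \<phi>(G)\<close>
  form a set \<open>T \<prec> G\<close>, which lies in \<open>\<G>\<close> by shiftedness and misses \<open>\<phi>(G)\<close>. Hence
  \<open>|\<F>| + |\<G>|\<close> is at most \<open>\<ell>+1\<close> plus the number of \<open>k\<close>-sets meeting \<open>[\<ell>+1]\<close> at least twice,
  which is \<open>g(n,k,\<ell>)\<close>.
\<close>

definition prefix_count :: "nat set \<Rightarrow> nat \<Rightarrow> nat" where
  "prefix_count S m = card {x\<in>S. x \<le> m}"

lemma prefix_count_le_card: "finite S \<Longrightarrow> prefix_count S m \<le> card S"
  unfolding prefix_count_def by (intro card_mono) auto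

lemma prefix_count_mono: "finite S \<Longrightarrow> i \<le> j \<Longrightarrow> prefix_count S i \<le> prefix_count S j"
  unfolding prefix_count_def by (intro card_mono) auto

lemma prefix_count_Suc:
  "prefix_count S (Suc m) = prefix_count S m + (if Suc m \<in> S then 1 else 0)"
proof -
  have "{x\<in>S. x \<le> Suc m} = {x\<in>S. x \<le> m} \<union> (if Suc m \<in> S then {Suc m} else {})"
    by (auto simp: le_Suc_eq)
  then show ?thesis unfolding prefix_count_def by auto
qed

lemma prefix_count_eq_card: "S \<subseteq> {1..n} \<Longrightarrow> n \<le> m \<Longrightarrow> prefix_count S m = card S"
  unfolding prefix_count_def by (rule arg_cong[where f=card]) auto

lemma prefix_count_min: "S \<subseteq> {1..n} \<Longrightarrow> prefix_count S (min m n) = prefix_count S m"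
  unfolding prefix_count_def by (rule arg_cong[where f=card]) auto

lemma card_Int_atLeastAtMost: "S \<subseteq> {1..n} \<Longrightarrow> card (S \<inter> {1..j}) = prefix_count S j"
  unfolding prefix_count_def by (rule arg_cong[where f=card]) auto

lemma prefix_count_le: "S \<subseteq> {1..n} \<Longrightarrow> prefix_count S j \<le> j"
proof -
  assume "S \<subseteq> {1..n}"
  then have "{x\<in>S. x \<le> j} \<subseteq> {1..j}" by auto
  then show ?thesis unfolding prefix_count_def
    by (metis card_atLeastAtMost card_mono diff_Suc_1 finite_atLeastAtMost)
qed

lemma card_atLeastAtMost_Diff: "S \<subseteq> {1..n} \<Longrightarrow> card ({1..j} - S) = j - prefix_count S j"
proof -
  assume S: "S \<subseteq> {1..n}"
  have "{1..j} - S = {1..j} - {x\<in>S. x \<le> j}" by auto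
  moreover have "{x\<in>S. x \<le> j} \<subseteq> {1..j}" using S by auto
  ultimately show ?thesis unfolding prefix_count_def by (simp add: card_Diff_subset finite_subset)
qed

lemma set_take_sorted_wrt_less:
  assumes "sorted_wrt (<) (xs::nat list)" "i < length xs"
  shows "{x \<in> set xs. x < xs ! i} = set (take i xs)"
proof
  show "{x \<in> set xs. x < xs ! i} \<subseteq> set (take i xs)"
  proof
    fix x assume "x \<in> {x \<in> set xs. x < xs ! i}"
    then obtain j where j: "j < length xs" "xs ! j = x" "x < xs ! i"
      by (auto simp: in_set_conv_nth)
    have "j < i"
    proof (rule ccontr)
      assume "\<not> j < i"
      then have "xs ! i \<le> xs ! j" using assms j
        by (metis le_neq_implies_less not_less order_less_imp_le sorted_wrt_nth_less)
      then show False using j by simp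
    qed
    then show "x \<in> set (take i xs)" using j
      by (metis in_set_conv_nth length_take min_less_iff_conj nth_take)
  qed
next
  show "set (take i xs) \<subseteq> {x \<in> set xs. x < xs ! i}"
  proof
    fix x assume "x \<in> set (take i xs)"
    then obtain j where j: "j < i" "xs ! j = x" using assms(2) by (auto simp: in_set_conv_nth)
    then have "xs ! j < xs ! i" using assms sorted_wrt_nth_less by blast
    then show "x \<in> {x \<in> set xs. x < xs ! i}" using j assms(2) by auto
  qed
qed

lemma
  assumes "finite A" "i < card A"
  shows kth_in: "kth A i \<in> A"
    and card_less_kth: "card {x\<in>A. x < kth A i} = i"
proof -
  let ?xs = "sorted_list_of_set A"
  have sorted: "sorted_wrt (<) ?xs"
    using assms by (simp add: sorted_list_of_set.strict_sorted_key_list_of_set)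
  show "kth A i \<in> A" unfolding kth_def using assms by (metis length_sorted_list_of_set
      nth_mem set_sorted_list_of_set)
  have "{x\<in>A. x < kth A i} = set (take i ?xs)" unfolding kth_def
    using set_take_sorted_wrt_less[OF sorted] assms by auto
  moreover have "distinct (take i ?xs)" using sorted by (simp add: strict_sorted_iff)
  ultimately show "card {x\<in>A. x < kth A i} = i" using assms by (simp add: distinct_card)
qed

lemma shift_le_if_prefix_count_le:
  assumes "finite A" "finite B" "card A = card B" "\<And>m. prefix_count B m \<le> prefix_count A m"
  shows "shift_le A B"
  unfolding shift_le_def
proof (intro conjI allI impI assms)
  fix i assume i: "i < card A"
  show "kth A i \<le> kth B i"
  proof (rule ccontr)
    let ?y = "kth B i"
    assume "\<not> kth A i \<le> ?y"
    have "insert ?y {z\<in>B. z < ?y} \<subseteq> {z\<in>B. z \<le> ?y}"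
      using kth_in[OF assms(2)] i assms(3) by auto
    then have "card (insert ?y {z\<in>B. z < ?y}) \<le> prefix_count B ?y"
      unfolding prefix_count_def using assms(2) by (intro card_mono) auto
    then have "i + 1 \<le> prefix_count B ?y"
      using card_less_kth[OF assms(2)] i assms(2,3) by simp
    moreover have "prefix_count A ?y \<le> card {z\<in>A. z < kth A i}"
      unfolding prefix_count_def using assms(1) \<open>\<not> kth A i \<le> ?y\<close> by (intro card_mono) auto
    ultimately show False using assms(4)[of ?y] card_less_kth[OF assms(1) i] by simp
  qed
qed

text \<open>Taking the \<open>l\<close> smallest elements of \<open>C\<close> greedily.\<close>

lemma exists_subset_prefix_count_ge:
  assumes "finite C" "l \<le> card C"
  shows "\<exists>T \<subseteq> C. card T = l \<and> (\<forall>m. min l (prefix_count C m) \<le> prefix_count T m)"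
  using assms(2)
proof (induction l)
  case 0
  then show ?case by auto
next
  case (Suc l)
  then obtain T where T: "T \<subseteq> C" "card T = l" "\<forall>m. min l (prefix_count C m) \<le> prefix_count T m"
    by auto
  have fin_T: "finite T" using T assms(1) finite_subset by blast
  have "C - T \<noteq> {}"
  proof
    assume "C - T = {}"
    then have "card C \<le> card T" using fin_T by (simp add: card_mono)
    then show False using Suc.prems T by simp
  qed
  define x where "x = Min (C - T)"
  have x: "x \<in> C - T" unfolding x_def using \<open>C - T \<noteq> {}\<close> assms(1) by (intro Min_in) auto
  have x_min: "\<And>y. y \<in> C - T \<Longrightarrow> x \<le> y" unfolding x_def using assms(1) by auto
  show ?case
  proof (intro exI[of _ "insert x T"] conjI allI)
    show "insert x T \<subseteq> C" "card (insert x T) = Suc l" using T fin_T x by auto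
    fix m
    show "min (Suc l) (prefix_count C m) \<le> prefix_count (insert x T) m"
    proof (cases "x \<le> m")
      case True
      then have "{y \<in> insert x T. y \<le> m} = insert x {y\<in>T. y \<le> m}" by auto
      then have "prefix_count (insert x T) m = Suc (prefix_count T m)"
        unfolding prefix_count_def using fin_T x by simp
      then show ?thesis using T(3) by (metis min_le_iff_disj not_less_eq_eq le_SucI)
    next
      case False
      then have "{y\<in>C. y \<le> m} \<subseteq> {y \<in> insert x T. y \<le> m}" using x_min by force
      then have "prefix_count C m \<le> prefix_count (insert x T) m"
        unfolding prefix_count_def using fin_T by (intro card_mono) auto
      then show ?thesis by simp
    qed
  qed
qed

section \<open>Non-trivial shifted families\<close>

text \<open>A member avoiding \<open>1\<close> exists by non-triviality, and every \<open>r\<close>-subset of \<open>[r+1]\<close> is below it.\<close>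

lemma shifted_non_trivial_contains:
  assumes shifted: "shifted n r X" and "non_trivial X" and "r + 1 \<le> n"
    and S: "S \<subseteq> {1..r+1}" "card S = r"
  shows "S \<in> X"
proof -
  obtain X0 where X0: "X0 \<in> X" "1 \<notin> X0"
    using \<open>non_trivial X\<close> unfolding non_trivial_def by auto
  have X0_sub: "X0 \<subseteq> {1..n}" and card_X0: "card X0 = r"
    using X0 shifted unfolding shifted_def rsets_def by auto
  have fin_X0: "finite X0" using X0_sub finite_subset by blast
  have fin_S: "finite S" using S finite_subset by blast
  have "shift_le S X0"
  proof (rule shift_le_if_prefix_count_le[OF fin_S fin_X0])
    show "card S = card X0" using S card_X0 by simp
    fix m
    have "{x \<in> X0. x \<le> m} \<subseteq> {2..m}"
    proof
      fix x assume x: "x \<in> {x \<in> X0. x \<le> m}"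
      then have "1 \<le> x" "x \<noteq> 1" using X0 X0_sub by auto
      then show "x \<in> {2..m}" using x by auto
    qed
    then have below_m: "prefix_count X0 m \<le> m - 1"
      unfolding prefix_count_def using card_mono[of "{2..m}"] by fastforce
    have "{1..min m (r+1)} \<subseteq> {x\<in>S. x \<le> m} \<union> ({1..r+1} - S)" by auto
    then have "card {1..min m (r+1)} \<le> card ({x\<in>S. x \<le> m} \<union> ({1..r+1} - S))"
      using fin_S by (intro card_mono) auto
    also have "\<dots> \<le> card {x\<in>S. x \<le> m} + card ({1..r+1} - S)" by (rule card_Un_le)
    also have "card ({1..r+1} - S) = 1" using S by (simp add: card_Diff_subset finite_subset)
    finally have "min m (r+1) \<le> prefix_count S m + 1" unfolding prefix_count_def by simp
    then show "prefix_count X0 m \<le> prefix_count S m"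
      using below_m prefix_count_le_card[OF fin_X0, of m] card_X0 by linarith
  qed
  moreover have "S \<in> rsets n r" using S \<open>r + 1 \<le> n\<close> unfolding rsets_def by auto
  ultimately show ?thesis using shifted X0 unfolding shifted_def by blast
qed

lemma two_le_card_Int_if_meets_shifted:
  assumes "shifted n r X" "non_trivial X" "r + 1 \<le> n"
    and meets: "\<And>Z. Z \<in> X \<Longrightarrow> Y \<inter> Z \<noteq> {}"
  shows "2 \<le> card (Y \<inter> {1..r+1})"
proof (rule ccontr)
  assume "\<not> 2 \<le> card (Y \<inter> {1..r+1})"
  moreover have "card ({1..r+1} - Y) = (r+1) - card (Y \<inter> {1..r+1})"
    by (metis Diff_Int2 Int_absorb Int_commute card_Diff_subset_Int card_atLeastAtMost
        diff_Suc_1 finite_Int finite_atLeastAtMost inf_le2)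
  ultimately have "r \<le> card ({1..r+1} - Y)" by simp
  then obtain S where S: "S \<subseteq> {1..r+1} - Y" "card S = r" by (meson obtain_subset_with_card_n)
  then have "S \<in> X" using shifted_non_trivial_contains[OF assms(1-3)] by auto
  moreover have "Y \<inter> S = {}" using S by auto
  ultimately show False using meets by blast
qed

section \<open>The flip map\<close>

lemma unit_step_attains:
  fixes f :: "nat \<Rightarrow> int"
  assumes step: "\<And>m. \<bar>f (Suc m) - f m\<bar> \<le> 1" and "f 0 \<le> c" "c \<le> f n"
  shows "\<exists>m \<le> n. f m = c"
  using assms(3)
proof (induction n)
  case 0
  then show ?case using assms(2) by auto
next
  case (Suc n)
  show ?case
  proof (cases "c \<le> f n")
    case True
    then show ?thesis using Suc.IH by (meson le_Suc_eq)
  next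
    case False
    then have "f (Suc n) = c" using Suc.prems step[of n] by linarith
    then show ?thesis by blast
  qed
qed

definition balance :: "nat set \<Rightarrow> nat \<Rightarrow> int" where
  "balance G m = int m - 2 * int (prefix_count G m)"

definition pivot :: "nat \<Rightarrow> nat \<Rightarrow> nat \<Rightarrow> nat set \<Rightarrow> nat" where
  "pivot n k l G = Max {m. m \<le> n \<and> balance G m = int k - int l}"

definition flip :: "nat \<Rightarrow> nat \<Rightarrow> nat \<Rightarrow> nat set \<Rightarrow> nat set" where
  "flip n k l G = {x\<in>G. pivot n k l G < x} \<union> ({1..pivot n k l G} - G)"

lemma balance_Suc: "\<bar>balance G (Suc m) - balance G m\<bar> \<le> 1"
  unfolding balance_def prefix_count_Suc by auto

locale flip_setting =
  fixes n k l :: nat and G :: "nat set"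
  assumes G_sub: "G \<subseteq> {1..n}" and card_G: "card G = l"
    and l_le_k: "l \<le> k" and k_l_le_n: "k + l \<le> n"
begin

abbreviation "s \<equiv> pivot n k l G"
abbreviation "a \<equiv> prefix_count G s"
abbreviation "P \<equiv> flip n k l G"

lemma finite_G: "finite G"
  using G_sub finite_subset by blast

lemma balance_n: "balance G n = int n - 2 * int l"
  unfolding balance_def using prefix_count_eq_card[OF G_sub, of n] card_G by simp

lemma pivot_le_n: "s \<le> n" and balance_pivot: "balance G s = int k - int l"
proof -
  have "{x\<in>G. x \<le> 0} = {}" using G_sub by auto
  then have "balance G 0 = 0" unfolding balance_def prefix_count_def by simp
  then have "\<exists>m \<le> n. balance G m = int k - int l"
    using unit_step_attains[where f="balance G", OF balance_Suc] balance_n l_le_k k_l_le_n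
    by auto
  then have "s \<in> {m. m \<le> n \<and> balance G m = int k - int l}"
    unfolding pivot_def by (intro Max_in) auto
  then show "s \<le> n" "balance G s = int k - int l" by auto
qed

lemma balance_gt_after_pivot:
  assumes "s < m" "m \<le> n"
  shows "balance G m > int k - int l"
proof (rule ccontr)
  assume "\<not> balance G m > int k - int l"
  then have "balance G (m + 0) \<le> int k - int l" by simp
  moreover have "int k - int l \<le> balance G (m + (n - m))" using balance_n k_l_le_n assms by simp
  ultimately obtain j where "j \<le> n - m" "balance G (m + j) = int k - int l"
    using unit_step_attains[of "\<lambda>j. balance G (m + j)" "int k - int l" "n - m"] balance_Suc
    by (metis add_Suc_right)
  then have "m + j \<le> s" unfolding pivot_def using assms by (intro Max_ge) auto
  then show False using assms by simp
qed

lemma prefix_count_pivot_le: "a \<le> s"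
  using prefix_count_le[OF G_sub] .

lemma prefix_count_flip:
  "prefix_count P m =
     (min m s - prefix_count G (min m s)) + (if s \<le> m then prefix_count G m - a else 0)"
proof -
  have split: "{x\<in>P. x \<le> m} = {x\<in>G. s < x \<and> x \<le> m} \<union> ({1..min m s} - G)"
    unfolding flip_def by auto
  have above: "card {x\<in>G. s < x \<and> x \<le> m} = (if s \<le> m then prefix_count G m - a else 0)"
  proof (cases "s \<le> m")
    case True
    then have "{x\<in>G. x \<le> m} = {x\<in>G. x \<le> s} \<union> {x\<in>G. s < x \<and> x \<le> m}" by auto
    then have "prefix_count G m = a + card {x\<in>G. s < x \<and> x \<le> m}"
      unfolding prefix_count_def using finite_G by (subst card_Un_disjoint[symmetric]) auto
    then show ?thesis using True by simp
  qed auto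
  show ?thesis unfolding prefix_count_def split
    by (subst card_Un_disjoint)
       (use above card_atLeastAtMost_Diff[OF G_sub] finite_G in \<open>auto simp: prefix_count_def\<close>)
qed

lemma flip_subset: "P \<subseteq> {1..n}"
  unfolding flip_def using G_sub pivot_le_n by auto

lemma card_flip: "card P = k"
proof -
  have "card P = prefix_count P n" using prefix_count_eq_card[OF flip_subset, of n] by simp
  also have "\<dots> = (s - a) + (l - a)"
    using prefix_count_flip[of n] pivot_le_n prefix_count_eq_card[OF G_sub, of n] card_G
    by (simp add: min_absorb2)
  finally show ?thesis
    using balance_pivot prefix_count_pivot_le prefix_count_le_card[OF finite_G, of s] card_G
    unfolding balance_def by linarith
qed

text \<open>The walk of \<open>P\<close> is the reflection of the walk of \<open>G\<close> up to \<open>s\<close> and stays strictly above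
  \<open>l - k\<close> afterwards, so \<open>s\<close> can be read off from \<open>P\<close>.\<close>

lemma balance_flip_pivot: "balance P s = int l - int k"
  using prefix_count_flip[of s] balance_pivot prefix_count_pivot_le unfolding balance_def by simp

lemma balance_flip_gt_after_pivot:
  assumes "s < m" "m \<le> n"
  shows "balance P m > int l - int k"
proof -
  have "a \<le> prefix_count G m" using prefix_count_mono[OF finite_G] assms by simp
  then have "int (prefix_count P m) = int s - int a + int (prefix_count G m) - int a"
    using prefix_count_flip[of m] assms prefix_count_pivot_le by (simp add: min_absorb2)
  then show ?thesis using balance_gt_after_pivot[OF assms] balance_pivot
    unfolding balance_def by linarith
qed

lemma flip_involutive: "G = {x\<in>P. s < x} \<union> ({1..s} - P)"
  unfolding flip_def using G_sub by auto

lemma two_le_card_flip_Int: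
  assumes "\<not> G \<subseteq> {1..l+1}" and two: "2 \<le> card (G \<inter> {1..k+1})"
  shows "2 \<le> card (P \<inter> {1..l+1})"
proof (cases "l + 1 \<le> s")
  case True
  from assms(1) obtain y where "y \<in> G" "y \<notin> {1..l+1}" by blast
  then have "{x\<in>G. x \<le> l+1} \<subset> G" using G_sub by fastforce
  then have "prefix_count G (l+1) < l"
    unfolding prefix_count_def using finite_G card_G by (metis psubset_card_mono)
  moreover have "{1..l+1} - G \<subseteq> P \<inter> {1..l+1}" unfolding flip_def using True by auto
  then have "card ({1..l+1} - G) \<le> card (P \<inter> {1..l+1})" by (intro card_mono) auto
  ultimately show ?thesis using card_atLeastAtMost_Diff[OF G_sub, of "l+1"] by linarith
next
  case False
  have "prefix_count G (k+1) \<le> prefix_count G (l+1) + (k - l)"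
  proof -
    have "{x\<in>G. x \<le> k+1} \<subseteq> {x\<in>G. x \<le> l+1} \<union> {l+2..k+1}" by auto
    then have "prefix_count G (k+1) \<le> card ({x\<in>G. x \<le> l+1} \<union> {l+2..k+1})"
      unfolding prefix_count_def by (intro card_mono) auto
    also have "\<dots> \<le> prefix_count G (l+1) + card {l+2..k+1}"
      unfolding prefix_count_def by (rule card_Un_le)
    finally show ?thesis by simp
  qed
  moreover have "prefix_count P (l+1) = (s - a) + (prefix_count G (l+1) - a)"
    using prefix_count_flip[of "l+1"] False by simp
  moreover have "a \<le> prefix_count G (l+1)" using prefix_count_mono[OF finite_G] False by simp
  ultimately show ?thesis
    using two balance_pivot prefix_count_pivot_le l_le_k
      card_Int_atLeastAtMost[OF G_sub, of "k+1"] card_Int_atLeastAtMost[OF flip_subset, of "l+1"]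
    unfolding balance_def by linarith
qed

text \<open>Up to \<open>s\<close> the complement of \<open>P\<close> agrees with \<open>G\<close>; beyond \<open>s\<close> use \<open>balance G s \<le> balance G m\<close>.\<close>

lemma prefix_count_le_complement_flip: "prefix_count G m \<le> prefix_count ({1..n} - P) m"
proof -
  define m' where "m' = min m n"
  have "m' \<le> n" unfolding m'_def by simp
  have reduce: "prefix_count G m = prefix_count G m'"
    "prefix_count ({1..n} - P) m = prefix_count ({1..n} - P) m'"
    unfolding m'_def using prefix_count_min[OF G_sub] prefix_count_min[of "{1..n} - P" n] by auto
  have "{x\<in>{1..n} - P. x \<le> m'} = {1..m'} - P" using \<open>m' \<le> n\<close> by auto
  then have complement: "prefix_count ({1..n} - P) m' = m' - prefix_count P m'"
    using card_atLeastAtMost_Diff[OF flip_subset, of m'] by (simp add: prefix_count_def)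
  have "prefix_count G m' \<le> m' - prefix_count P m'"
  proof (cases "m' < s")
    case True
    then show ?thesis using prefix_count_flip[of m'] prefix_count_le[OF G_sub, of m'] by simp
  next
    case False
    have "balance G s \<le> balance G m'"
    proof (cases "s = m'")
      case False
      then have "s < m'" using \<open>\<not> m' < s\<close> by simp
      then show ?thesis using balance_gt_after_pivot[OF _ \<open>m' \<le> n\<close>] balance_pivot by fastforce
    qed simp
    moreover have "a \<le> prefix_count G m'" using prefix_count_mono[OF finite_G] False by simp
    ultimately show ?thesis
      using prefix_count_flip[of m'] False prefix_count_le[OF flip_subset, of m'] prefix_count_pivot_le
      unfolding balance_def by simp
  qed
  then show ?thesis using reduce complement by simp
qed

lemma exists_shift_le_disjoint_flip: "\<exists>T \<in> rsets n l. shift_le T G \<and> T \<inter> P = {}"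
proof -
  define C where "C = {1..n} - P"
  have "finite C" unfolding C_def by simp
  have "card C = n - k"
    unfolding C_def using card_flip flip_subset by (simp add: card_Diff_subset finite_subset)
  then have "l \<le> card C" using k_l_le_n by simp
  then obtain T where T: "T \<subseteq> C" "card T = l" "\<forall>m. min l (prefix_count C m) \<le> prefix_count T m"
    using exists_subset_prefix_count_ge[OF \<open>finite C\<close>] by blast
  have "shift_le T G"
  proof (rule shift_le_if_prefix_count_le)
    show "finite T" "card T = card G" using T card_G \<open>finite C\<close> by (auto intro: finite_subset)
    fix m
    have "prefix_count G m \<le> min l (prefix_count C m)"
      using prefix_count_le_complement_flip[of m] prefix_count_le_card[OF finite_G, of m] card_G
      unfolding C_def by simp
    then show "prefix_count G m \<le> prefix_count T m" using T(3) order_trans by blast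
  qed (rule finite_G)
  moreover have "T \<in> rsets n l" "T \<inter> P = {}" using T unfolding C_def rsets_def by auto
  ultimately show ?thesis by blast
qed

end

lemma inj_on_flip: "inj_on (flip n k l) {G. flip_setting n k l G}"
proof (rule inj_onI, simp only: mem_Collect_eq)
  fix G1 G2 assume "flip_setting n k l G1" "flip_setting n k l G2"
    and eq: "flip n k l G1 = flip n k l G2"
  interpret G1: flip_setting n k l G1 by fact
  interpret G2: flip_setting n k l G2 by fact
  have "pivot n k l G1 = pivot n k l G2"
  proof (rule linorder_cases)
    assume "pivot n k l G1 < pivot n k l G2"
    from G1.balance_flip_gt_after_pivot[OF this G2.pivot_le_n] G2.balance_flip_pivot eq
    show ?thesis by simp
  next
    assume "pivot n k l G2 < pivot n k l G1"
    from G2.balance_flip_gt_after_pivot[OF this G1.pivot_le_n] G1.balance_flip_pivot eq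
    show ?thesis by simp
  qed
  then show "G1 = G2" using G1.flip_involutive G2.flip_involutive eq by simp
qed

section \<open>Counting\<close>

lemma finite_rsets: "finite (rsets n r)"
  unfolding rsets_def by (rule finite_subset[of _ "Pow {1..n}"]) auto

lemma card_subsets_with_trace:
  assumes "finite U" "W \<subseteq> U" "i \<le> k"
  shows "card {F. F \<subseteq> U \<and> card F = k \<and> card (F \<inter> W) = i}
         = (card W choose i) * (card (U - W) choose (k - i))"
proof -
  have fin_W: "finite W" using assms finite_subset by blast
  let ?L = "{F. F \<subseteq> U \<and> card F = k \<and> card (F \<inter> W) = i}"
  let ?R = "{T. T \<subseteq> W \<and> card T = i} \<times> {R. R \<subseteq> U - W \<and> card R = k - i}"
  have "bij_betw (\<lambda>F. (F \<inter> W, F - W)) ?L ?R"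
  proof (rule bij_betw_byWitness[where f'="\<lambda>(T,R). T \<union> R"])
    show "(\<lambda>F. (F \<inter> W, F - W)) ` ?L \<subseteq> ?R"
    proof
      fix p assume "p \<in> (\<lambda>F. (F \<inter> W, F - W)) ` ?L"
      then obtain F where F: "F \<subseteq> U" "card F = k" "card (F \<inter> W) = i"
        and p: "p = (F \<inter> W, F - W)" by auto
      have "finite F" using F assms(1) finite_subset by blast
      then have "card (F - W) = card F - card (F \<inter> W)"
        by (metis card_Diff_subset_Int finite_Int Diff_Int2 Int_absorb Int_commute)
      then show "p \<in> ?R" using F p by auto
    qed
    show "(\<lambda>(T, R). T \<union> R) ` ?R \<subseteq> ?L"
    proof
      fix F assume "F \<in> (\<lambda>(T, R). T \<union> R) ` ?R"
      then obtain T R where T: "T \<subseteq> W" "card T = i" and R: "R \<subseteq> U - W" "card R = k - i"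
        and F: "F = T \<union> R" by auto
      have "finite T" "finite R" using T R fin_W assms(1) finite_subset by blast+
      moreover have "T \<inter> R = {}" "(T \<union> R) \<inter> W = T" using T R by auto
      ultimately show "F \<in> ?L" using T R F assms by (auto simp: card_Un_disjoint)
    qed
  qed auto
  then have "card ?L = card ?R" by (rule bij_betw_same_card)
  also have "\<dots> = (card W choose i) * (card (U - W) choose (k - i))"
    using assms(1) fin_W by (simp add: card_cartesian_product n_subsets)
  finally show ?thesis .
qed

definition heavy_sets :: "nat \<Rightarrow> nat \<Rightarrow> nat \<Rightarrow> nat set set" where
  "heavy_sets n k w = {X \<in> rsets n k. 2 \<le> card (X \<inter> {1..w})}"

lemma card_heavy_sets:
  assumes "l + 1 \<le> n"
  shows "int (card (heavy_sets n k (l+1))) =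
    (\<Sum>i = 2..l+1. binom (int l + 1) (int i) * binom (int n - int l - 1) (int k - int i))"
proof -
  define W where "W = {1..l+1}"
  define layer where "layer i = {X. X \<subseteq> {1..n} \<and> card X = k \<and> card (X \<inter> W) = i}" for i
  have "card (X \<inter> W) \<le> l + 1" for X
    unfolding W_def by (metis card_atLeastAtMost diff_Suc_1 card_mono finite_atLeastAtMost inf_le2)
  then have "heavy_sets n k (l+1) = (\<Union>i\<in>{2..l+1}. layer i)"
    unfolding heavy_sets_def rsets_def layer_def W_def by fastforce
  then have "card (heavy_sets n k (l+1)) = (\<Sum>i = 2..l+1. card (layer i))"
    by (simp only:) (rule card_UN_disjoint, auto simp: layer_def intro: finite_subset[of _ "Pow {1..n}"])
  moreover have "int (card (layer i)) =
      binom (int l + 1) (int i) * binom (int n - int l - 1) (int k - int i)" for i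
  proof (cases "i \<le> k")
    case True
    have "card (layer i) = (card W choose i) * (card ({1..n} - W) choose (k - i))"
      unfolding layer_def by (rule card_subsets_with_trace) (use True assms in \<open>auto simp: W_def\<close>)
    also have "card ({1..n} - W) = n - l - 1"
      unfolding W_def using assms by (simp add: card_Diff_subset)
    moreover have "nat (int l + 1) = Suc l" "nat (int n - int l - 1) = n - l - 1"
      "nat (int k - int i) = k - i" using True assms by auto
    ultimately show ?thesis using True assms by (simp add: W_def binom_def)
  next
    case False
    have "card (X \<inter> W) \<le> card X" if "X \<subseteq> {1..n}" for X
      using that by (intro card_mono) (auto intro: finite_subset)
    then have "layer i = {}" unfolding layer_def using False by fastforce
    then show ?thesis using False unfolding binom_def by simp
  qed
  ultimately show ?thesis by simp
qed

lemma binom_Suc_self: "binom (int l + 1) (int l) = int l + 1"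
  unfolding binom_def by (simp add: nat_add_distrib binomial_Suc_n)

lemma card_rsets_in_initial_le:
  assumes "G \<subseteq> rsets n l"
  shows "card {X\<in>G. X \<subseteq> {1..l+1}} \<le> l + 1"
proof -
  have "{X\<in>G. X \<subseteq> {1..l+1}} \<subseteq> {S. S \<subseteq> {1..l+1} \<and> card S = l}"
    using assms unfolding rsets_def by auto
  then have "card {X\<in>G. X \<subseteq> {1..l+1}} \<le> card {S. S \<subseteq> {1..l+1} \<and> card S = l}"
    by (intro card_mono) auto
  then show ?thesis by (simp add: n_subsets)
qed

lemma card_add_card_flipped_le_heavy_sets:
  assumes "l \<le> k" "k + l \<le> n" "shifted n l G" "cross_intersecting F G"
    and F_heavy: "F \<subseteq> heavy_sets n k (l+1)"
    and G_meets: "\<And>X. X \<in> G \<Longrightarrow> 2 \<le> card (X \<inter> {1..k+1})"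
  shows "card F + card {X\<in>G. \<not> X \<subseteq> {1..l+1}} \<le> card (heavy_sets n k (l+1))"
proof -
  let ?G' = "{X\<in>G. \<not> X \<subseteq> {1..l+1}}"
  have setting: "flip_setting n k l X" if "X \<in> G" for X
    using that assms(1-3) unfolding flip_setting_def shifted_def rsets_def by auto
  have flip_in: "flip n k l ` ?G' \<subseteq> heavy_sets n k (l+1) - F"
  proof
    fix Y assume "Y \<in> flip n k l ` ?G'"
    then obtain X where X: "X \<in> G" "\<not> X \<subseteq> {1..l+1}" and Y: "Y = flip n k l X" by auto
    interpret flip_setting n k l X using setting[OF X(1)] .
    have "Y \<in> heavy_sets n k (l+1)"
      using flip_subset card_flip two_le_card_flip_Int[OF X(2) G_meets[OF X(1)]] Y
      unfolding heavy_sets_def rsets_def by auto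
    moreover have "Y \<notin> F"
    proof
      assume "Y \<in> F"
      obtain T where "T \<in> rsets n l" "shift_le T X" "T \<inter> Y = {}"
        using exists_shift_le_disjoint_flip Y by blast
      moreover from this have "T \<in> G" using assms(3) X(1) unfolding shifted_def by blast
      ultimately show False using assms(4) \<open>Y \<in> F\<close> unfolding cross_intersecting_def by blast
    qed
    ultimately show "Y \<in> heavy_sets n k (l+1) - F" by blast
  qed
  have inj: "inj_on (flip n k l) ?G'"
    by (rule inj_on_subset[OF inj_on_flip]) (auto intro: setting)
  have fin: "finite (heavy_sets n k (l+1))"
    unfolding heavy_sets_def using finite_rsets by simp
  have "finite F" "finite (flip n k l ` ?G')"
    using flip_in F_heavy fin by (auto intro: finite_subset)
  then have "card F + card ?G' = card (F \<union> flip n k l ` ?G')"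
    using flip_in inj by (subst card_Un_disjoint) (auto simp: card_image)
  also have "\<dots> \<le> card (heavy_sets n k (l+1))"
    using flip_in F_heavy fin by (intro card_mono) auto
  finally show ?thesis .
qed

theorem theorem3p3:
  fixes n k l :: nat and F G :: "nat set set"
  assumes "k \<ge> l" and "l \<ge> 2" and "n \<ge> k + l"
    and "F \<subseteq> rsets n k" and "G \<subseteq> rsets n l"
    and "non_trivial F" and "non_trivial G"
    and "shifted n k F" and "shifted n l G"
    and "cross_intersecting F G"
  shows "int (card F) + int (card G) \<le> g_bound n k l"
proof -
  have "l + 1 \<le> n" using assms(1-3) by simp
  have F_heavy: "F \<subseteq> heavy_sets n k (l+1)"
  proof
    fix X assume "X \<in> F"
    have "2 \<le> card (X \<inter> {1..l+1})"
    proof (rule two_le_card_Int_if_meets_shifted[OF assms(9,7) \<open>l + 1 \<le> n\<close>])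
      show "X \<inter> Z \<noteq> {}" if "Z \<in> G" for Z
        using assms(10) \<open>X \<in> F\<close> that unfolding cross_intersecting_def by blast
    qed
    then show "X \<in> heavy_sets n k (l+1)" using assms(4) \<open>X \<in> F\<close> unfolding heavy_sets_def by auto
  qed
  have G_meets: "2 \<le> card (X \<inter> {1..k+1})" if "X \<in> G" for X
  proof (rule two_le_card_Int_if_meets_shifted[OF assms(8,6)])
    show "k + 1 \<le> n" using assms(2,3) by simp
    show "X \<inter> Z \<noteq> {}" if "Z \<in> F" for Z
      using assms(10) \<open>X \<in> G\<close> that unfolding cross_intersecting_def by blast
  qed
  let ?small = "{X\<in>G. X \<subseteq> {1..l+1}}" and ?large = "{X\<in>G. \<not> X \<subseteq> {1..l+1}}"
  have "finite G" using assms(5) finite_rsets by (rule finite_subset)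
  then have "card G = card ?small + card ?large"
    by (subst card_Un_disjoint[symmetric]) (auto intro: arg_cong[where f=card])
  moreover have "card F + card ?large \<le> card (heavy_sets n k (l+1))"
    by (rule card_add_card_flipped_le_heavy_sets[OF assms(1,3,9,10) F_heavy G_meets])
  ultimately show ?thesis
    using card_rsets_in_initial_le[OF assms(5)] card_heavy_sets[OF \<open>l + 1 \<le> n\<close>, of k]
      binom_Suc_self[of l]
    unfolding g_bound_def by linarith
qed

end
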